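(* Let $m\ge1$, $G(x)=-x^3$, and let $F(x)=|x^h|^2$. Let $(\widetilde\varrho_\varepsilon)_{0<\varepsilon\le1}$ be positive functions on $\Omega=\mathbb R^2\times\,]0,1[$ solving $\Pi(\widetilde\varrho_\varepsilon)=\varepsilon^{2(m-1)}F+\varepsilon^mG$ on $\Omega$. Then for every $l>0$ there exists a constant $C(l)>1$ such that for all $\varepsilon\in\,]0,1]$ one has $\widetilde\varrho_\varepsilon\le C(l)$ on $\overline{\mathbb B}_l$, where $\mathbb B_l:=\{x\in\Omega:|x^h|<l\}$. If instead $F\equiv0$ (and $\widetilde\varrho_\varepsilon$ solve $\Pi(\widetilde\varrho_\varepsilon)=\varepsilon^mG$), then there exists a constant $C>1$ such that $|\widetilde\varrho_\varepsilon(x)|\le C$ for all $\varepsilon\in\,]0,1]$ and all $x\in\Omega$.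
   Context: Points of $\Omega$ are $x=(x^h,x^3)$ with $x^h\in\mathbb R^2$. The pressure is $p(\varrho,\vartheta)=\vartheta^{5/2}P(\varrho/\vartheta^{3/2})+\frac a3\vartheta^4$ with $a>0$, where $P\in C^1([0,\infty))\cap C^2(]0,\infty[)$, $P(0)=0$, $P'(Z)>0$ for all $Z\ge0$, $0<\big(\frac53P(Z)-P'(Z)Z\big)/Z<c$ for all $Z>0$, and $\lim_{Z\to+\infty}P(Z)/Z^{5/3}=P_\infty>0$. Fix a constant $\overline\vartheta>0$ and set $\Pi(\varrho):=\int_1^\varrho\frac{\partial_\varrho p(z,\overline\vartheta)}{z}dz$ for $\varrho>0$. *)

theory Defs
  imports "HOL-Analysis.Analysis"
begin

text \<open>Points of Omega are pairs (xh, x3) with xh in R^2 (as real * real, Euclidean norm).\<close>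
definition Omega :: "((real \<times> real) \<times> real) set" where
  "Omega = {x. 0 < snd x \<and> snd x < 1}"

definition Bl :: "real \<Rightarrow> ((real \<times> real) \<times> real) set" where
  "Bl l = {x \<in> Omega. norm (fst x) < l}"

definition pressure :: "(real \<Rightarrow> real) \<Rightarrow> real \<Rightarrow> real \<Rightarrow> real \<Rightarrow> real" where
  "pressure P a rho theta = theta powr (5/2) * P (rho / theta powr (3/2)) + a / 3 * theta ^ 4"

definition Pi_fun :: "(real \<Rightarrow> real) \<Rightarrow> real \<Rightarrow> real \<Rightarrow> real \<Rightarrow> real" where
  "Pi_fun P a thetabar rho =
     (let g = (\<lambda>z. deriv (\<lambda>r. pressure P a r thetabar) z / z) in
      if 1 \<le> rho then integral {1..rho} g else - integral {rho..1} g)"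

end

theory Submission
  imports Defs
begin

(* For rho \<ge> 1 the integrand of Pi is nonnegative, so Pi(rho) \<ge> 0. Comparing 1/z with 1/rho
   on [1, rho] gives Pi(rho) \<ge> thetabar^(5/2) (P(rho/thetabar^(3/2)) - P(thetabar^(-3/2))) / rho,
   and since P grows like Z^(5/3), Pi tends to infinity. Hence the sublevel set {Pi \<le> l^2}
   is bounded, which bounds the densities wherever the right-hand side is at most l^2: on the
   closed cylinder of radius l, and on all of Omega when F = 0 (there Pi(rho) < 0 forces rho < 1). *)

lemma filterlim_powr_at_top:
  assumes "(p::real) > 0"
  shows "filterlim (\<lambda>x. x powr p) at_top at_top"
proof (subst filterlim_cong[OF refl refl])
  show "LIM x at_top. exp (p * ln x) :> at_top"
    by (rule filterlim_compose[OF exp_at_top filterlim_tendsto_pos_mult_at_top[OF tendsto_const]])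
       (simp_all add: ln_at_top assms)
  show "eventually (\<lambda>x. x powr p = exp (p * ln x)) at_top"
    using eventually_gt_at_top[of 0] by eventually_elim (simp add: powr_def)
qed

lemma superlinear_of_powr_asymptotic:
  fixes f :: "real \<Rightarrow> real"
  assumes "s > 1" "L > 0" "((\<lambda>u. f u / u powr s) \<longlongrightarrow> L) at_top"
  shows "filterlim (\<lambda>u. f u / u) at_top at_top"
proof -
  have "filterlim (\<lambda>u. f u / u powr s * u powr (s - 1)) at_top at_top"
    using assms by (intro filterlim_tendsto_pos_mult_at_top filterlim_powr_at_top) auto
  moreover have "eventually (\<lambda>u. f u / u powr s * u powr (s - 1) = f u / u) at_top"
    using eventually_gt_at_top[of 0] by eventually_elim (simp add: powr_diff)
  ultimately show ?thesis
    using filterlim_cong by fastforce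
qed

lemma pressure_has_real_derivative:
  fixes P P' :: "real \<Rightarrow> real"
  assumes thetabar: "thetabar > 0"
    and P_deriv: "(P has_real_derivative P' (z / thetabar powr (3/2))) (at (z / thetabar powr (3/2)))"
  shows "((\<lambda>r. pressure P a r thetabar) has_real_derivative
           thetabar * P' (z / thetabar powr (3/2))) (at z)"
proof -
  define k where "k = thetabar powr (3/2)"
  have "((\<lambda>r. P (r / k)) has_real_derivative P' (z / k) * (1 / k)) (at z)"
    by (rule DERIV_chain2[where f = P and g = "\<lambda>r. r / k"])
       (use P_deriv thetabar in \<open>auto simp: k_def intro!: derivative_eq_intros\<close>)
  then have "((\<lambda>r. thetabar powr (5/2) * P (r / k) + a / 3 * thetabar ^ 4)
      has_real_derivative thetabar powr (5/2) * (P' (z / k) * (1 / k)) + 0) (at z)"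
    by (intro DERIV_add DERIV_cmult DERIV_const)
  moreover have "thetabar powr (5/2) = thetabar * k"
    using thetabar by (simp add: k_def powr_mult_base)
  moreover have "k > 0"
    using thetabar by (simp add: k_def)
  ultimately show ?thesis
    unfolding pressure_def k_def [symmetric] by simp
qed

locale monotone_C1_pressure =
  fixes P P' :: "real \<Rightarrow> real" and thetabar :: real
  assumes thetabar_pos: "thetabar > 0"
    and P_has_derivative: "\<And>Z. Z > 0 \<Longrightarrow> (P has_real_derivative P' Z) (at Z)"
    and P'_continuous: "continuous_on {0<..} P'"
    and P'_nonneg: "\<And>Z. Z > 0 \<Longrightarrow> 0 \<le> P' Z"
begin

lemma Pi_fun_eq_integral:
  assumes "1 \<le> rho"
  shows "Pi_fun P a thetabar rho = integral {1..rho} (\<lambda>z. thetabar * P' (z / thetabar powr (3/2)) / z)"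
proof -
  have "deriv (\<lambda>r. pressure P a r thetabar) z = thetabar * P' (z / thetabar powr (3/2))"
    if "z \<in> {1..rho}" for z
  proof -
    have "z / thetabar powr (3/2) > 0"
      using that thetabar_pos by auto
    then show ?thesis
      by (intro DERIV_imp_deriv pressure_has_real_derivative thetabar_pos P_has_derivative)
  qed
  then show ?thesis
    using assms unfolding Pi_fun_def Let_def by (auto intro!: integral_cong)
qed

lemma integrable_Pi_integrand:
  "(\<lambda>z. thetabar * P' (z / thetabar powr (3/2)) / z) integrable_on {1..rho}"
proof -
  have image: "(\<lambda>z. z / thetabar powr (3/2)) ` {1..rho} \<subseteq> {0<..}"
    by (rule image_subsetI) (use thetabar_pos in auto)
  have "continuous_on {1..rho} (\<lambda>z. P' (z / thetabar powr (3/2)))"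
    by (rule continuous_on_compose2[OF P'_continuous _ image])
       (use thetabar_pos in \<open>auto intro!: continuous_intros\<close>)
  then show ?thesis
    by (intro integrable_continuous_interval continuous_intros) auto
qed

lemma Pi_fun_nonneg:
  assumes "1 \<le> rho"
  shows "0 \<le> Pi_fun P a thetabar rho"
proof -
  have "0 \<le> integral {1..rho} (\<lambda>z. thetabar * P' (z / thetabar powr (3/2)) / z)"
  proof (rule integral_nonneg[OF integrable_Pi_integrand])
    fix z assume z: "z \<in> {1..rho}"
    then have "0 \<le> P' (z / thetabar powr (3/2))"
      using thetabar_pos by (intro P'_nonneg) auto
    then show "0 \<le> thetabar * P' (z / thetabar powr (3/2)) / z"
      using thetabar_pos z by auto
  qed
  then show ?thesis
    by (simp add: Pi_fun_eq_integral[OF assms])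
qed

lemma Pi_fun_lower_bound:
  assumes rho: "1 \<le> rho"
  defines "k \<equiv> thetabar powr (3/2)"
  shows "thetabar / rho * (k * P (rho / k) - k * P (1 / k)) \<le> Pi_fun P a thetabar rho"
proof -
  have k: "k > 0"
    using thetabar_pos by (simp add: k_def)
  have "((\<lambda>z. P' (z / k)) has_integral k * P (rho / k) - k * P (1 / k)) {1..rho}"
  proof (rule fundamental_theorem_of_calculus[OF rho])
    fix z assume "z \<in> {1..rho}"
    then have "((\<lambda>r. k * P (r / k)) has_real_derivative k * (P' (z / k) * (1 / k))) (at z)"
      using k by (intro DERIV_cmult DERIV_chain2[where f = P and g = "\<lambda>r. r / k"] P_has_derivative)
                 (auto intro!: derivative_eq_intros)
    then have "((\<lambda>r. k * P (r / k)) has_real_derivative P' (z / k)) (at z within {1..rho})"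
      using k by (auto intro: has_field_derivative_at_within)
    then show "((\<lambda>r. k * P (r / k)) has_vector_derivative P' (z / k)) (at z within {1..rho})"
      by (simp add: has_real_derivative_iff_has_vector_derivative)
  qed
  then have lower_integral: "((\<lambda>z. thetabar / rho * P' (z / k)) has_integral
                               thetabar / rho * (k * P (rho / k) - k * P (1 / k))) {1..rho}"
    by (rule has_integral_mult_right)
  have integrand_ge: "thetabar / rho * P' (z / k) \<le> thetabar * P' (z / k) / z" if z: "z \<in> {1..rho}" for z
  proof -
    have "0 \<le> thetabar * P' (z / k)"
      using thetabar_pos k z by (intro mult_nonneg_nonneg P'_nonneg) auto
    then have "thetabar * P' (z / k) / rho \<le> thetabar * P' (z / k) / z"
      using z by (intro divide_left_mono) auto
    then show ?thesis
      by simp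
  qed
  have integral: "((\<lambda>z. thetabar * P' (z / k) / z) has_integral
                     integral {1..rho} (\<lambda>z. thetabar * P' (z / k) / z)) {1..rho}"
    unfolding k_def by (rule integrable_integral[OF integrable_Pi_integrand])
  have "thetabar / rho * (k * P (rho / k) - k * P (1 / k)) \<le> integral {1..rho} (\<lambda>z. thetabar * P' (z / k) / z)"
    using lower_integral integral integrand_ge by (rule has_integral_le)
  also have "\<dots> = Pi_fun P a thetabar rho"
    unfolding k_def by (rule Pi_fun_eq_integral[OF rho, symmetric])
  finally show ?thesis .
qed

lemma filterlim_Pi_fun_at_top:
  assumes "Pinf > 0" "((\<lambda>Z. P Z / Z powr (5/3)) \<longlongrightarrow> Pinf) at_top"
  shows "filterlim (Pi_fun P a thetabar) at_top at_top"
proof -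
  define k where "k = thetabar powr (3/2)"
  have k: "k > 0"
    using thetabar_pos by (simp add: k_def)
  have P_superlinear: "LIM u at_top. P u / u :> at_top"
    by (rule superlinear_of_powr_asymptotic[OF _ assms]) simp
  have "LIM rho at_top. 1 / k * rho :> at_top"
    using k by (intro filterlim_tendsto_pos_mult_at_top[OF tendsto_const] filterlim_ident) auto
  then have "LIM rho at_top. rho / k :> at_top"
    by simp
  then have "LIM rho at_top. P (rho / k) / (rho / k) :> at_top"
    by (rule filterlim_compose[OF P_superlinear])
  then have "LIM rho at_top. thetabar * (P (rho / k) / (rho / k)) :> at_top"
    using thetabar_pos by (intro filterlim_tendsto_pos_mult_at_top[OF tendsto_const]) auto
  moreover have "((\<lambda>rho. - (thetabar * k * P (1 / k)) / rho) \<longlongrightarrow> 0) at_top"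
    by (rule tendsto_divide_0[OF tendsto_const filterlim_at_top_imp_at_infinity[OF filterlim_ident]])
  ultimately have "LIM rho at_top. - (thetabar * k * P (1 / k)) / rho + thetabar * (P (rho / k) / (rho / k)) :> at_top"
    by (rule filterlim_tendsto_add_at_top[rotated])
  moreover have "eventually (\<lambda>rho. - (thetabar * k * P (1 / k)) / rho + thetabar * (P (rho / k) / (rho / k))
                                   \<le> Pi_fun P a thetabar rho) at_top"
    using eventually_ge_at_top[of 1]
  proof eventually_elim
    case (elim rho)
    have "- (thetabar * k * P (1 / k)) / rho + thetabar * (P (rho / k) / (rho / k))
            = thetabar / rho * (k * P (rho / k) - k * P (1 / k))"
      using k elim by (simp add: field_simps)
    then show ?case
      using Pi_fun_lower_bound[OF elim, folded k_def] by simp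
  qed
  ultimately show ?thesis
    by (rule filterlim_at_top_mono)
qed

end

lemma bounded_sublevel_of_filterlim_at_top:
  fixes f :: "real \<Rightarrow> real"
  assumes "filterlim f at_top at_top"
  obtains C where "C > 1" "\<And>r. f r \<le> K \<Longrightarrow> r \<le> C"
proof -
  have "eventually (\<lambda>r. K < f r) at_top"
    using assms by (simp add: filterlim_at_top_dense)
  then obtain R where R: "\<And>r. R \<le> r \<Longrightarrow> K < f r"
    by (auto simp: eventually_at_top_linorder)
  show ?thesis
  proof (rule that[of "max R 2"])
    fix r assume "f r \<le> K"
    then show "r \<le> max R 2"
      using R[of r] by (cases "R \<le> r") auto
  qed simp
qed

lemma closure_Bl_subset: "closure (Bl l) \<subseteq> {x. norm (fst x) \<le> l}"
proof (rule closure_minimal)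
  show "Bl l \<subseteq> {x. norm (fst x) \<le> l}"
    by (auto simp: Bl_def)
  show "closed {x :: (real \<times> real) \<times> real. norm (fst x) \<le> l}"
    by (intro closed_Collect_le continuous_intros)
qed

lemma monotone_C1_pressureI:
  fixes P P' :: "real \<Rightarrow> real"
  assumes "thetabar > 0"
    and P_C1: "\<forall>Z\<ge>0. (P has_real_derivative P' Z) (at Z within {0..})"
    and P'_cont: "continuous_on {0..} P'"
    and P'_pos: "\<forall>Z\<ge>0. P' Z > 0"
  shows "monotone_C1_pressure P P' thetabar"
proof (rule monotone_C1_pressure.intro)
  fix Z :: real assume Z: "0 < Z"
  have "(P has_real_derivative P' Z) (at Z within {0..})"
    using P_C1 Z by auto
  moreover have "at Z within {0..} = at Z"
    using Z by (intro at_within_interior) auto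
  ultimately show "(P has_real_derivative P' Z) (at Z)"
    by simp
  show "0 \<le> P' Z"
    using P'_pos Z by (simp add: less_imp_le)
next
  show "0 < thetabar"
    by fact
  show "continuous_on {0<..} P'"
    using P'_cont by (rule continuous_on_subset) auto
qed

lemma source_term_le_on_closed_cylinder:
  fixes \<epsilon> m :: real
  assumes "\<epsilon> \<in> {0<..1}" "m \<ge> 1" "x \<in> closure (Bl l) \<inter> Omega"
  shows "\<epsilon> powr (2 * (m - 1)) * (norm (fst x))\<^sup>2 + \<epsilon> powr m * (- snd x) \<le> l\<^sup>2"
proof -
  have "\<epsilon> powr (2 * (m - 1)) * (norm (fst x))\<^sup>2 \<le> 1 * l\<^sup>2"
    using assms closure_Bl_subset by (intro mult_mono powr_le1 power_mono) auto
  moreover have "\<epsilon> powr m * (- snd x) \<le> 0"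
    using assms(3) by (simp add: Omega_def mult_nonneg_nonpos)
  ultimately show ?thesis
    by simp
qed

theorem lemma2p3:
  fixes P P' P'' :: "real \<Rightarrow> real" and a thetabar c Pinf m :: real
  assumes a_pos: "a > 0"
    and thetabar_pos: "thetabar > 0"
    and P_C1: "\<forall>Z\<ge>0. (P has_real_derivative P' Z) (at Z within {0..})"
    and P'_cont: "continuous_on {0..} P'"
    and P_C2: "\<forall>Z>0. (P' has_real_derivative P'' Z) (at Z)"
    and P''_cont: "continuous_on {0<..} P''"
    and P0: "P 0 = 0"
    and P'_pos: "\<forall>Z\<ge>0. P' Z > 0"
    and P_bounds: "\<forall>Z>0. 0 < (5/3 * P Z - P' Z * Z) / Z \<and> (5/3 * P Z - P' Z * Z) / Z < c"
    and P_inf: "Pinf > 0" "((\<lambda>Z. P Z / Z powr (5/3)) \<longlongrightarrow> Pinf) at_top"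
    and m_ge: "m \<ge> 1"
  shows
   "(\<forall>rho :: real \<Rightarrow> (real \<times> real) \<times> real \<Rightarrow> real.
       (\<forall>\<epsilon>\<in>{0<..1}. \<forall>x\<in>Omega. rho \<epsilon> x > 0 \<and>
          Pi_fun P a thetabar (rho \<epsilon> x) =
            \<epsilon> powr (2 * (m - 1)) * (norm (fst x))\<^sup>2 + \<epsilon> powr m * (- snd x))
       \<longrightarrow> (\<forall>l>0. \<exists>C>1. \<forall>\<epsilon>\<in>{0<..1}. \<forall>x\<in>closure (Bl l) \<inter> Omega. rho \<epsilon> x \<le> C))
  \<and> (\<forall>rho :: real \<Rightarrow> (real \<times> real) \<times> real \<Rightarrow> real.
       (\<forall>\<epsilon>\<in>{0<..1}. \<forall>x\<in>Omega. rho \<epsilon> x > 0 \<and>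
          Pi_fun P a thetabar (rho \<epsilon> x) = \<epsilon> powr m * (- snd x))
       \<longrightarrow> (\<exists>C>1. \<forall>\<epsilon>\<in>{0<..1}. \<forall>x\<in>Omega. \<bar>rho \<epsilon> x\<bar> \<le> C))"
proof -
  interpret monotone_C1_pressure P P' thetabar
    by (rule monotone_C1_pressureI[OF thetabar_pos P_C1 P'_cont P'_pos])
  have Pi_at_top: "filterlim (Pi_fun P a thetabar) at_top at_top"
    by (rule filterlim_Pi_fun_at_top[OF P_inf])
  show ?thesis
  proof (intro conjI allI impI)
    fix rho :: "real \<Rightarrow> (real \<times> real) \<times> real \<Rightarrow> real" and l :: real
    assume H: "\<forall>\<epsilon>\<in>{0<..1}. \<forall>x\<in>Omega. rho \<epsilon> x > 0 \<and>
                 Pi_fun P a thetabar (rho \<epsilon> x) =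
                   \<epsilon> powr (2 * (m - 1)) * (norm (fst x))\<^sup>2 + \<epsilon> powr m * (- snd x)"
    obtain C where C: "C > 1" "\<And>r. Pi_fun P a thetabar r \<le> l\<^sup>2 \<Longrightarrow> r \<le> C"
      using bounded_sublevel_of_filterlim_at_top[OF Pi_at_top, where K = "l\<^sup>2"] by blast
    have "rho \<epsilon> x \<le> C" if "\<epsilon> \<in> {0<..1}" "x \<in> closure (Bl l) \<inter> Omega" for \<epsilon> x
    proof (rule C(2))
      have "Pi_fun P a thetabar (rho \<epsilon> x) =
              \<epsilon> powr (2 * (m - 1)) * (norm (fst x))\<^sup>2 + \<epsilon> powr m * (- snd x)"
        using H that by blast
      then show "Pi_fun P a thetabar (rho \<epsilon> x) \<le> l\<^sup>2"
        using source_term_le_on_closed_cylinder[OF that(1) m_ge that(2)] by simp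
    qed
    with C(1) show "\<exists>C>1. \<forall>\<epsilon>\<in>{0<..1}. \<forall>x\<in>closure (Bl l) \<inter> Omega. rho \<epsilon> x \<le> C"
      by blast
  next
    fix rho :: "real \<Rightarrow> (real \<times> real) \<times> real \<Rightarrow> real"
    assume H: "\<forall>\<epsilon>\<in>{0<..1}. \<forall>x\<in>Omega. rho \<epsilon> x > 0 \<and>
                 Pi_fun P a thetabar (rho \<epsilon> x) = \<epsilon> powr m * (- snd x)"
    have "\<bar>rho \<epsilon> x\<bar> \<le> 2" if "\<epsilon> \<in> {0<..1}" "x \<in> Omega" for \<epsilon> x
    proof -
      have pos: "rho \<epsilon> x > 0" and eq: "Pi_fun P a thetabar (rho \<epsilon> x) = \<epsilon> powr m * (- snd x)"
        using H that by blast+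
      have "\<epsilon> powr m * (- snd x) < 0"
        using that by (intro mult_pos_neg) (auto simp: Omega_def)
      then have "rho \<epsilon> x < 1"
        using eq Pi_fun_nonneg[of "rho \<epsilon> x" a] by fastforce
      with pos show ?thesis
        by simp
    qed
    then show "\<exists>C>1. \<forall>\<epsilon>\<in>{0<..1}. \<forall>x\<in>Omega. \<bar>rho \<epsilon> x\<bar> \<le> C"
      by (intro exI[of _ 2]) auto
  qed
qed

end
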